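(* Let $G$ be a compact group and $V$ a finite-dimensional unitary complex representation with $V\cong\bigoplus_{\ell=1}^L V_\ell^{\oplus R_\ell}$, where the $V_\ell$ are pairwise non-isomorphic irreducible representations with $\dim V_\ell=N_\ell$. Represent each $f\in V$ by an $L$-tuple $(A_1,\ldots,A_L)$ of complex $N_\ell\times R_\ell$ matrices (the $i$-th column of $A_\ell$ being the coordinates, in a fixed orthonormal basis of $V_\ell$, of the component of $f$ in the $i$-th copy of $V_\ell$), and let $H=\prod_{\ell=1}^L U(N_\ell)$ act by $(U_\ell)_\ell\cdot(A_\ell)_\ell=(U_\ell A_\ell)_\ell$. Let $\mathcal L_f$ denote the complex linear span of the orbit $H\cdot f$. Then $$\dim_{\mathbb C}\mathcal L_f=\sum_{\ell=1}^L(\operatorname{rank}A_\ell)\,N_\ell,$$ and in particular $\dim_{\mathbb C}\mathcal L_f\le\sum_{\ell=1}^L\min(N_\ell R_\ell,N_\ell^2)$.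
   Context: $\mathcal L_f=\{\sum_i a_i(h_i\cdot f): a_i\in\mathbb C,\ h_i\in H\}$ is the smallest complex linear subspace of $V$ containing $H\cdot f$. *)

theory Defs
  imports "Jordan_Normal_Form.DL_Rank" "HOL-Library.Function_Algebras"
begin

definition conj_transpose :: "complex mat \<Rightarrow> complex mat" where
  "conj_transpose U = mat (dim_col U) (dim_row U) (\<lambda>(i, j). cnj (U $$ (j, i)))"

definition unitary_mat :: "nat \<Rightarrow> complex mat \<Rightarrow> bool" where
  "unitary_mat n U \<longleftrightarrow> U \<in> carrier_mat n n \<and>
     conj_transpose U * U = 1\<^sub>m n \<and> U * conj_transpose U = 1\<^sub>m n"

text \<open>An element f of V is an L-tuple of matrices (A_l)_{l<L}, A_l of size N_l x R_l.
  We identify it with its coordinate function (l,i,j) -> (A_l)_{ij}, zero outside the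
  index range; the space of such coordinate functions is a complex vector space under
  pointwise operations.\<close>
definition tuple_coords ::
    "nat \<Rightarrow> (nat \<Rightarrow> nat) \<Rightarrow> (nat \<Rightarrow> nat) \<Rightarrow> (nat \<Rightarrow> complex mat) \<Rightarrow> nat \<Rightarrow> nat \<Rightarrow> nat \<Rightarrow> complex" where
  "tuple_coords L N R F = (\<lambda>l i j. if l < L \<and> i < N l \<and> j < R l then F l $$ (i, j) else 0)"

definition cscale :: "complex \<Rightarrow> (nat \<Rightarrow> nat \<Rightarrow> nat \<Rightarrow> complex) \<Rightarrow> (nat \<Rightarrow> nat \<Rightarrow> nat \<Rightarrow> complex)" where
  "cscale c f = (\<lambda>l i j. c * f l i j)"

definition H_orbit ::
    "nat \<Rightarrow> (nat \<Rightarrow> nat) \<Rightarrow> (nat \<Rightarrow> nat) \<Rightarrow> (nat \<Rightarrow> complex mat) \<Rightarrow> (nat \<Rightarrow> nat \<Rightarrow> nat \<Rightarrow> complex) set" where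
  "H_orbit L N R A = {tuple_coords L N R (\<lambda>l. U l * A l) | U. \<forall>l<L. unitary_mat (N l) (U l)}"

definition L_span ::
    "nat \<Rightarrow> (nat \<Rightarrow> nat) \<Rightarrow> (nat \<Rightarrow> nat) \<Rightarrow> (nat \<Rightarrow> complex mat) \<Rightarrow> (nat \<Rightarrow> nat \<Rightarrow> nat \<Rightarrow> complex) set" where
  "L_span L N R A = module.span cscale (H_orbit L N R A)"

end

theory Submission
  imports Defs "HOL-Combinatorics.Transposition"
begin

(* Every square matrix is a linear combination of unitary ones (already of signed transposition
   matrices), and replacing one component U_l of an element of H by -U_l isolates the l-th block;
   hence L_f consists of all tuples (M_l A_l)_l with arbitrary N_l x N_l matrices M_l.
   Factor A_l = C_l B_l, where the columns of C_l are a maximal independent set of columns of A_l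
   and B_l = D_l A_l for a left inverse D_l of C_l (it exists because the Gram matrix C_l^H C_l is
   invertible). Then L_f is spanned by the tuples whose only nonzero row is a row of some B_l,
   placed in one of the N_l rows of block l. These rank(A_l) N_l tuples per block are linearly
   independent, because B_l contains an identity matrix in the columns of A_l chosen for C_l. *)

lemma index_mult_mat_sum:
  "A \<in> carrier_mat n m \<Longrightarrow> B \<in> carrier_mat m p \<Longrightarrow> i < n \<Longrightarrow> j < p \<Longrightarrow>
   (A * B) $$ (i, j) = (\<Sum>k<m. A $$ (i, k) * B $$ (k, j))"
  by (auto simp: scalar_prod_def lessThan_atLeast0 intro!: sum.cong)

lemma index_mult_mat_vec_sum:
  "A \<in> carrier_mat n m \<Longrightarrow> v \<in> carrier_vec m \<Longrightarrow> i < n \<Longrightarrow>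
   (A *\<^sub>v v) $ i = (\<Sum>j<m. A $$ (i, j) * v $ j)"
  by (auto simp: scalar_prod_def lessThan_atLeast0 intro!: sum.cong)

lemma conj_transpose_carrier_mat [simp]:
  "C \<in> carrier_mat n r \<Longrightarrow> conj_transpose C \<in> carrier_mat r n"
  unfolding conj_transpose_def by auto

lemma index_conj_transpose [simp]:
  "i < dim_col C \<Longrightarrow> j < dim_row C \<Longrightarrow> conj_transpose C $$ (i, j) = cnj (C $$ (j, i))"
  unfolding conj_transpose_def by auto

lemma dim_conj_transpose [simp]:
  "dim_row (conj_transpose C) = dim_col C" "dim_col (conj_transpose C) = dim_row C"
  unfolding conj_transpose_def by auto

lemma conj_transpose_mult_vec_cscalar:
  fixes C :: "complex mat"
  assumes C: "C \<in> carrier_mat n r" and x: "x \<in> carrier_vec r" and y: "y \<in> carrier_vec n"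
  shows "(conj_transpose C *\<^sub>v y) \<bullet>c x = y \<bullet>c (C *\<^sub>v x)"
proof -
  have "(conj_transpose C *\<^sub>v y) \<bullet>c x = (\<Sum>k<r. (\<Sum>i<n. cnj (C $$ (i, k)) * y $ i) * cnj (x $ k))"
    using C x y by (simp add: scalar_prod_def lessThan_atLeast0 index_mult_mat_vec_sum[of _ r n])
  also have "\<dots> = (\<Sum>i<n. y $ i * cnj (\<Sum>k<r. C $$ (i, k) * x $ k))"
    by (simp add: sum_distrib_left sum_distrib_right sum.swap[of _ "{..<r}"] ac_simps)
  also have "\<dots> = y \<bullet>c (C *\<^sub>v x)"
    using C x y by (simp add: scalar_prod_def lessThan_atLeast0 index_mult_mat_vec_sum)
  finally show ?thesis .
qed

section \<open>Rank factorization\<close>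

lemma left_inverse_if_injective:
  fixes C :: "complex mat"
  assumes C: "C \<in> carrier_mat n r"
    and inj: "\<And>x. x \<in> carrier_vec r \<Longrightarrow> C *\<^sub>v x = 0\<^sub>v n \<Longrightarrow> x = 0\<^sub>v r"
  obtains D where "D \<in> carrier_mat r n" "D * C = 1\<^sub>m r"
proof -
  let ?G = "conj_transpose C * C"
  have G: "?G \<in> carrier_mat r r" using C by (simp add: mult_carrier_mat[of _ r n])
  have "x = 0\<^sub>v r" if x: "x \<in> carrier_vec r" and Gx: "?G *\<^sub>v x = 0\<^sub>v r" for x
  proof -
    have "(C *\<^sub>v x) \<bullet>c (C *\<^sub>v x) = (conj_transpose C *\<^sub>v (C *\<^sub>v x)) \<bullet>c x"
      using conj_transpose_mult_vec_cscalar[OF C x] C x by simp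
    also have "\<dots> = 0"
      using Gx C x by (simp add: assoc_mult_mat_vec[symmetric, of _ r n _ r])
    finally have "C *\<^sub>v x = 0\<^sub>v n"
      using conjugate_square_eq_0_vec[OF mult_mat_vec_carrier[OF C x]] by simp
    then show ?thesis by (rule inj[OF x])
  qed
  then have "det ?G \<noteq> 0" using det_0_iff_vec_prod_zero[OF G] by blast
  from det_non_zero_imp_unit[OF G this, unfolded Units_def, of "()"]
  obtain Gi where Gi: "Gi \<in> carrier_mat r r" "Gi * ?G = 1\<^sub>m r"
    by (auto simp: ring_mat_def)
  show ?thesis
  proof
    show "Gi * conj_transpose C \<in> carrier_mat r n" using Gi C by simp
    show "Gi * conj_transpose C * C = 1\<^sub>m r" using Gi C by (simp add: assoc_mult_mat[of _ r r _ n])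
  qed
qed

lemma (in vec_space) col_in_span_maximal_indep:
  assumes A: "A \<in> carrier_mat n m" and S: "maximal S (\<lambda>T. T \<subseteq> set (cols A) \<and> lin_indpt T)"
    and j: "j < m"
  shows "col A j \<in> span S"
proof -
  have S_cols: "S \<subseteq> set (cols A)" and S_indep: "lin_indpt S"
    using S unfolding maximal_def by auto
  have S_carrier: "S \<subseteq> carrier_vec n" using S_cols A cols_dim by blast
  have col: "col A j \<in> set (cols A)" using j A by (simp add: cols_def)
  show ?thesis
  proof (cases "col A j \<in> S")
    case False
    then have "lin_dep (insert (col A j) S)"
      using S S_cols col unfolding maximal_def by blast
    then show ?thesis
      using lin_dep_iff_in_span[OF S_carrier S_indep _ False] j A by simp
  qed (use in_own_span S_carrier in auto)
qed

lemma column_basis: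
  fixes A :: "'a::field mat"
  assumes A: "A \<in> carrier_mat n m"
  defines "r \<equiv> vec_space.rank n A"
  obtains C js where "C \<in> carrier_mat n r"
    and "\<And>x. x \<in> carrier_vec r \<Longrightarrow> C *\<^sub>v x = 0\<^sub>v n \<Longrightarrow> x = 0\<^sub>v r"
    and "\<And>k. k < r \<Longrightarrow> js k < m \<and> col C k = col A (js k)"
    and "\<And>j. j < m \<Longrightarrow> \<exists>y\<in>carrier_vec r. col A j = C *\<^sub>v y"
    and "r \<le> n"
proof -
  interpret vec_space "TYPE('a)" n .
  define indep_cols where "indep_cols T \<longleftrightarrow> T \<subseteq> set (cols A) \<and> lin_indpt T" for T
  obtain S where "finite S" and S: "maximal S indep_cols"
    using maximal_exists_superset[of "set (cols A)" indep_cols "{}"]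
    unfolding indep_cols_def by (auto simp: lin_dep_def)
  have S_cols: "S \<subseteq> set (cols A)" and S_indep: "lin_indpt S"
    using S unfolding maximal_def indep_cols_def by auto
  have S_carrier: "S \<subseteq> carrier_vec n" using S_cols A cols_dim by blast
  have r: "r = card S"
    unfolding r_def using rank_card_indpt[OF A] S unfolding indep_cols_def by blast
  obtain cs where cs: "distinct cs" "set cs = S" using finite_distinct_list[OF \<open>finite S\<close>] by blast
  have len_cs: "length cs = r" using r cs distinct_card by fastforce
  define C where "C = mat_of_cols n cs"
  have C: "C \<in> carrier_mat n r" unfolding C_def using len_cs by auto
  have cols_C: "cols C = cs" unfolding C_def using cs S_carrier by simp
  have inj: "x = 0\<^sub>v r" if "x \<in> carrier_vec r" "C *\<^sub>v x = 0\<^sub>v n" for x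
    using lin_depI[OF C that(1) _ that(2)] S_indep cols_C cs by auto
  have "\<exists>j<m. col C k = col A j" if k: "k < r" for k
  proof -
    have "col C k = cs ! k" using cols_nth[of k C] cols_C C k by simp
    then have "col C k \<in> set (cols A)" using S_cols cs k len_cs by auto
    then show ?thesis using A by (auto simp: cols_def)
  qed
  then obtain js where js: "\<And>k. k < r \<Longrightarrow> js k < m \<and> col C k = col A (js k)" by metis
  have "\<exists>y\<in>carrier_vec r. col A j = C *\<^sub>v y" if j: "j < m" for j
  proof -
    have "col A j \<in> span S"
      using col_in_span_maximal_indep[OF A S[unfolded indep_cols_def] j] .
    then obtain a where "lincomb a S = col A j" using finite_in_span[OF \<open>finite S\<close> S_carrier] by blast
    moreover have "C *\<^sub>v vec r (\<lambda>i. a (col C i)) = lincomb a S"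
      using mat_mult_eq_lincomb[OF C] cols_C cs unfolding C_def by simp
    ultimately show ?thesis by (metis vec_carrier)
  qed
  moreover have "r \<le> n" using li_le_dim(2)[OF fin_dim S_carrier S_indep] dim_is_n r by simp
  ultimately show ?thesis using that C inj js by blast
qed

lemma rank_factorization_with_pivots:
  fixes A :: "complex mat"
  assumes A: "A \<in> carrier_mat n m"
  defines "r \<equiv> vec_space.rank n A"
  obtains C D js where "C \<in> carrier_mat n r" and "D \<in> carrier_mat r n" and "C * (D * A) = A"
    and "\<And>k. k < r \<Longrightarrow> js k < m"
    and "\<And>k k'. k < r \<Longrightarrow> k' < r \<Longrightarrow> (D * A) $$ (k', js k) = (if k' = k then 1 else 0)"
proof -
  obtain C js where C: "C \<in> carrier_mat n r"
    and inj: "\<And>x. x \<in> carrier_vec r \<Longrightarrow> C *\<^sub>v x = 0\<^sub>v n \<Longrightarrow> x = 0\<^sub>v r"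
    and js: "\<And>k. k < r \<Longrightarrow> js k < m \<and> col C k = col A (js k)"
    and span: "\<And>j. j < m \<Longrightarrow> \<exists>y\<in>carrier_vec r. col A j = C *\<^sub>v y"
    unfolding r_def by (rule column_basis[OF A]) blast
  obtain D where D: "D \<in> carrier_mat r n" and DC: "D * C = 1\<^sub>m r"
    using left_inverse_if_injective[OF C inj] by blast
  have DA: "D * A \<in> carrier_mat r m" using D A by simp
  have "C * (D * A) = A"
  proof (rule mat_col_eqI)
    fix j assume "j < dim_col A"
    then have j: "j < m" using A by simp
    obtain y where y: "y \<in> carrier_vec r" "col A j = C *\<^sub>v y" using span[OF j] by blast
    have "col (C * (D * A)) j = C *\<^sub>v (D *\<^sub>v (C *\<^sub>v y))"
      using col_mult2[OF C DA j] col_mult2[OF D A j] y by simp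
    also have "\<dots> = C *\<^sub>v y" using assoc_mult_mat_vec[OF D C y(1), symmetric] DC y by simp
    finally show "col (C * (D * A)) j = col A j" using y by simp
  qed (use C DA A in auto)
  moreover have "(D * A) $$ (k', js k) = (if k' = k then 1 else 0)" if k: "k < r" "k' < r" for k k'
  proof -
    have "col (D * A) (js k) = col (D * C) k"
      using col_mult2[OF D A] col_mult2[OF D C] js k by simp
    then show ?thesis using DC DA js k by (metis col_one index_col index_unit_vec(1) carrier_matD)
  qed
  ultimately show ?thesis using js by (intro that[OF C D]) auto
qed

lemma rank_le_nr:
  fixes A :: "'a::field mat"
  assumes "A \<in> carrier_mat n m"
  shows "vec_space.rank n A \<le> n"
  by (rule column_basis[OF assms]) assumption

section \<open>Unitary and signed permutation matrices\<close>

lemma unitary_matI: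
  assumes U: "U \<in> carrier_mat n n" and "conj_transpose U * U = 1\<^sub>m n"
  shows "unitary_mat n U"
  using assms mat_mult_left_right_inverse[OF conj_transpose_carrier_mat[OF U] U]
  unfolding unitary_mat_def by blast

lemma unitary_mat_one: "unitary_mat n (1\<^sub>m n)"
proof -
  have "conj_transpose (1\<^sub>m n) = 1\<^sub>m n"
    by (rule eq_matI) (auto simp: conj_transpose_def)
  then show ?thesis by (intro unitary_matI) auto
qed

lemma unitary_mat_uminus:
  assumes "unitary_mat n U"
  shows "unitary_mat n (- U)"
proof -
  have U: "U \<in> carrier_mat n n" and UU: "conj_transpose U * U = 1\<^sub>m n"
    using assms unfolding unitary_mat_def by auto
  have "conj_transpose (- U) = - conj_transpose U"
    by (rule eq_matI) (auto simp: conj_transpose_def)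
  moreover have "- conj_transpose U * - U = conj_transpose U * U"
    using U by simp
  ultimately show ?thesis using U UU by (intro unitary_matI) auto
qed

definition signed_perm_mat :: "nat \<Rightarrow> (nat \<Rightarrow> nat) \<Rightarrow> (nat \<Rightarrow> complex) \<Rightarrow> complex mat" where
  "signed_perm_mat n \<tau> s = mat n n (\<lambda>(i, j). if i = \<tau> j then s j else 0)"

lemma signed_perm_mat_carrier [simp]: "signed_perm_mat n \<tau> s \<in> carrier_mat n n"
  unfolding signed_perm_mat_def by simp

lemma index_signed_perm_mat_mult:
  assumes \<tau>: "\<And>j. j < n \<Longrightarrow> \<tau> j < n \<and> \<tau> (\<tau> j) = j"
    and A: "A \<in> carrier_mat n m" and x: "x < n" and b: "b < m"
  shows "(signed_perm_mat n \<tau> s * A) $$ (x, b) = s (\<tau> x) * A $$ (\<tau> x, b)"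
proof -
  have "x = \<tau> y \<longleftrightarrow> y = \<tau> x" if "y < n" for y
    using \<tau> x that by metis
  then have "(signed_perm_mat n \<tau> s * A) $$ (x, b) = (\<Sum>y<n. if y = \<tau> x then s y * A $$ (y, b) else 0)"
    unfolding index_mult_mat_sum[OF signed_perm_mat_carrier A x b]
    by (intro sum.cong) (auto simp: signed_perm_mat_def x)
  then show ?thesis using x \<tau> by simp
qed

lemma conj_transpose_signed_perm_mat:
  assumes \<tau>: "\<And>j. j < n \<Longrightarrow> \<tau> j < n \<and> \<tau> (\<tau> j) = j"
  shows "conj_transpose (signed_perm_mat n \<tau> s) = signed_perm_mat n \<tau> (\<lambda>j. cnj (s (\<tau> j)))"
  by (rule eq_matI) (use \<tau> in \<open>auto simp: conj_transpose_def signed_perm_mat_def\<close>)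

lemma unitary_signed_perm_mat:
  assumes \<tau>: "\<And>j. j < n \<Longrightarrow> \<tau> j < n \<and> \<tau> (\<tau> j) = j"
    and s: "\<And>j. j < n \<Longrightarrow> cnj (s j) * s j = 1"
  shows "unitary_mat n (signed_perm_mat n \<tau> s)"
proof (rule unitary_matI)
  show "conj_transpose (signed_perm_mat n \<tau> s) * signed_perm_mat n \<tau> s = 1\<^sub>m n"
  proof (rule eq_matI)
    fix i j assume "i < dim_row (1\<^sub>m n)" "j < dim_col (1\<^sub>m n)"
    then have i: "i < n" and j: "j < n" by auto
    have "(conj_transpose (signed_perm_mat n \<tau> s) * signed_perm_mat n \<tau> s) $$ (i, j)
        = cnj (s (\<tau> (\<tau> i))) * signed_perm_mat n \<tau> s $$ (\<tau> i, j)"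
      using index_signed_perm_mat_mult[OF \<tau> signed_perm_mat_carrier i j, where s = "\<lambda>j. cnj (s (\<tau> j))"]
      by (simp add: conj_transpose_signed_perm_mat[OF \<tau>])
    also have "\<dots> = 1\<^sub>m n $$ (i, j)"
      using \<tau> s i j by (auto simp: signed_perm_mat_def) (metis \<tau>)
    finally show "(conj_transpose (signed_perm_mat n \<tau> s) * signed_perm_mat n \<tau> s) $$ (i, j) = 1\<^sub>m n $$ (i, j)" .
  qed (auto simp: signed_perm_mat_def)
qed simp

lemma transposition_involution:
  "a < n \<Longrightarrow> c < n \<Longrightarrow> j < n \<Longrightarrow>
    Transposition.transpose a c j < n \<and> Transposition.transpose a c (Transposition.transpose a c j) = j"
  by (auto simp: transpose_def)

text \<open>Half the sum of these two signed transposition matrices is the matrix unit at \<open>(a, c)\<close>.\<close>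
lemma index_signed_transpositions_sum_mult:
  assumes A: "A \<in> carrier_mat n m" and "a < n" "c < n" "x < n" "b < m"
  shows "(signed_perm_mat n (Transposition.transpose a c) (\<lambda>_. 1) * A) $$ (x, b)
      + (signed_perm_mat n (Transposition.transpose a c) (\<lambda>y. if y = c then 1 else - 1) * A) $$ (x, b)
      = (if x = a then 2 * A $$ (c, b) else 0)"
  using assms transposition_involution[of a n c]
  by (auto simp: index_signed_perm_mat_mult[OF _ A] transpose_def)

section \<open>The span of the orbit\<close>

lemma vector_space_cscale: "vector_space cscale"
  by unfold_locales (auto simp: cscale_def fun_eq_iff algebra_simps)

lemma sum_apply: "sum f S x = (\<Sum>a\<in>S. f a x)"
  by (induction S rule: infinite_finite_induct) auto

lemma cscale_apply [simp]: "cscale c f l i j = c * f l i j"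
  unfolding cscale_def by simp

definition block_coords ::
    "(nat \<Rightarrow> nat) \<Rightarrow> (nat \<Rightarrow> nat) \<Rightarrow> nat \<Rightarrow> complex mat \<Rightarrow> nat \<Rightarrow> nat \<Rightarrow> nat \<Rightarrow> complex" where
  "block_coords N R l X = (\<lambda>l' i j. if l' = l \<and> i < N l \<and> j < R l then X $$ (i, j) else 0)"

lemma block_coords_unitary_in_L_span:
  assumes l: "l < L" and A: "A l \<in> carrier_mat (N l) (R l)" and P: "unitary_mat (N l) P"
  shows "block_coords N R l (P * A l) \<in> L_span L N R A"
proof -
  interpret vector_space cscale by (rule vector_space_cscale)
  define T where "T Q = tuple_coords L N R (\<lambda>l'. ((\<lambda>l'. 1\<^sub>m (N l'))(l := Q)) l' * A l')" for Q
  have T: "T Q \<in> L_span L N R A" if "unitary_mat (N l) Q" for Q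
    unfolding T_def L_span_def H_orbit_def using that
    by (intro span_base CollectI exI[of _ "(\<lambda>l'. 1\<^sub>m (N l'))(l := Q)"]) (auto simp: unitary_mat_one)
  have "P \<in> carrier_mat (N l) (N l)" using P unfolding unitary_mat_def by blast
  then have "block_coords N R l (P * A l) = cscale (1/2) (T P - T (- P))"
    using l A by (auto simp: fun_eq_iff block_coords_def T_def tuple_coords_def)
  also have "\<dots> \<in> L_span L N R A"
    using T[OF P] T[OF unitary_mat_uminus[OF P]] unfolding L_span_def by (intro span_scale span_diff)
  finally show ?thesis .
qed

lemma block_coords_mult_in_L_span:
  assumes l: "l < L" and A: "A l \<in> carrier_mat (N l) (R l)" and M: "M \<in> carrier_mat (N l) (N l)"
  shows "block_coords N R l (M * A l) \<in> L_span L N R A"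
proof -
  interpret vector_space cscale by (rule vector_space_cscale)
  define P where "P a c s = signed_perm_mat (N l) (Transposition.transpose a c) s" for a c s
  define \<sigma> where "\<sigma> c y = (if y = c then 1 else - 1 :: complex)" for c y :: nat
  have P1: "block_coords N R l (P a c (\<lambda>_. 1) * A l) \<in> L_span L N R A"
    and P2: "block_coords N R l (P a c (\<sigma> c) * A l) \<in> L_span L N R A"
    if "a < N l" "c < N l" for a c
    unfolding P_def using that transposition_involution l A
    by (auto simp: \<sigma>_def intro!: block_coords_unitary_in_L_span[of l L A N R] unitary_signed_perm_mat)
  note entry = index_signed_transpositions_sum_mult[OF A, folded P_def \<sigma>_def]
  let ?S = "\<Sum>a<N l. \<Sum>c<N l. cscale (M $$ (a, c) / 2)
      (block_coords N R l (P a c (\<lambda>_. 1) * A l) + block_coords N R l (P a c (\<sigma> c) * A l))"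
  have "block_coords N R l (M * A l) = ?S"
  proof (intro ext)
    fix l' x b
    show "block_coords N R l (M * A l) l' x b = ?S l' x b"
    proof (cases "l' = l \<and> x < N l \<and> b < R l")
      case True
      then have "?S l' x b = (\<Sum>a<N l. \<Sum>c<N l. M $$ (a, c) / 2 * (if x = a then 2 * A l $$ (c, b) else 0))"
        by (simp add: sum_apply block_coords_def distrib_left[symmetric] entry)
      also have "\<dots> = (\<Sum>a<N l. if a = x then \<Sum>c<N l. M $$ (a, c) * A l $$ (c, b) else 0)"
        by (intro sum.cong) auto
      also have "\<dots> = (\<Sum>c<N l. M $$ (x, c) * A l $$ (c, b))"
        using True by simp
      also have "\<dots> = block_coords N R l (M * A l) l' x b"
        using True index_mult_mat_sum[OF M A] by (simp add: block_coords_def)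
      finally show ?thesis by simp
    qed (auto simp: sum_apply block_coords_def)
  qed
  also have "\<dots> \<in> L_span L N R A"
    using P1 P2 unfolding L_span_def by (intro span_sum span_scale span_add) auto
  finally show ?thesis .
qed

section \<open>A basis of the span\<close>

lemma independent_if_dual_coordinates:
  assumes "\<And>v. v \<in> S \<Longrightarrow> \<exists>l i j. v l i j = 1 \<and> (\<forall>w\<in>S. w \<noteq> v \<longrightarrow> w l i j = 0)"
  shows "\<not> module.dependent cscale S"
proof -
  interpret vector_space cscale by (rule vector_space_cscale)
  show ?thesis
  proof
    assume "dependent S"
    then obtain t u v where t: "finite t" "t \<subseteq> S" and sum0: "(\<Sum>w\<in>t. cscale (u w) w) = 0"
      and v: "v \<in> t" "u v \<noteq> 0"
      unfolding dependent_explicit by blast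
    obtain l i j where "v l i j = 1" and others: "\<forall>w\<in>S. w \<noteq> v \<longrightarrow> w l i j = 0"
      using assms v t by blast
    then have "(\<Sum>w\<in>t. cscale (u w) w) l i j = u v"
      using t v by (simp add: sum_apply sum.remove[OF t(1) v(1)] subset_iff sum.neutral)
    then show False using sum0 v by simp
  qed
qed

definition row_block_indices :: "nat \<Rightarrow> (nat \<Rightarrow> nat) \<Rightarrow> (nat \<Rightarrow> nat) \<Rightarrow> (nat \<times> nat \<times> nat) set" where
  "row_block_indices L N r = (SIGMA l:{..<L}. {..<N l} \<times> {..<r l})"

definition row_block ::
    "(nat \<Rightarrow> nat) \<Rightarrow> (nat \<Rightarrow> complex mat) \<Rightarrow> nat \<times> nat \<times> nat \<Rightarrow> nat \<Rightarrow> nat \<Rightarrow> nat \<Rightarrow> complex" where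
  "row_block R B = (\<lambda>(l, i, k) l' a b. if l' = l \<and> a = i \<and> b < R l then B l $$ (k, b) else 0)"

lemma card_row_block_indices: "card (row_block_indices L N r) = (\<Sum>l<L. r l * N l)"
  unfolding row_block_indices_def by (simp add: card_cartesian_product mult.commute)

locale pivoted_row_blocks =
  fixes L :: nat and R r :: "nat \<Rightarrow> nat" and B :: "nat \<Rightarrow> complex mat" and js :: "nat \<Rightarrow> nat \<Rightarrow> nat"
  assumes pivot_col: "l < L \<Longrightarrow> k < r l \<Longrightarrow> js l k < R l"
    and pivot_entry: "l < L \<Longrightarrow> k < r l \<Longrightarrow> k' < r l \<Longrightarrow> B l $$ (k', js l k) = (if k' = k then 1 else 0)"
begin

lemma row_block_at_pivot:
  assumes p: "(l, i, k) \<in> row_block_indices L N r" and q: "q \<in> row_block_indices L N r"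
  shows "row_block R B q l i (js l k) = (if q = (l, i, k) then 1 else 0)"
  using p q pivot_col[of l k] pivot_entry[of l k] unfolding row_block_indices_def row_block_def
  by (cases q) (auto split: if_split_asm)

lemma inj_on_row_block: "inj_on (row_block R B) (row_block_indices L N r)"
proof (rule inj_onI)
  fix p q assume p: "p \<in> row_block_indices L N r" and q: "q \<in> row_block_indices L N r"
    and "row_block R B p = row_block R B q"
  moreover obtain l i k where "p = (l, i, k)" by (cases p) auto
  ultimately show "p = q" using row_block_at_pivot[OF _ p] row_block_at_pivot[OF _ q] by (metis zero_neq_one)
qed

lemma independent_row_blocks: "\<not> module.dependent cscale (row_block R B ` row_block_indices L N r)"
proof (rule independent_if_dual_coordinates, clarify)
  fix p assume p: "p \<in> row_block_indices L N r"
  obtain l i k where [simp]: "p = (l, i, k)" by (cases p) auto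
  show "\<exists>l' a b. row_block R B p l' a b = 1 \<and>
      (\<forall>w\<in>row_block R B ` row_block_indices L N r. w \<noteq> row_block R B p \<longrightarrow> w l' a b = 0)"
    using row_block_at_pivot p by (intro exI[of _ l] exI[of _ i] exI[of _ "js l k"]) auto
qed

end

lemma tuple_coords_in_span_row_blocks:
  assumes F: "\<And>l. l < L \<Longrightarrow> F l = G l * B l"
    and G: "\<And>l. l < L \<Longrightarrow> G l \<in> carrier_mat (N l) (r l)"
    and B: "\<And>l. l < L \<Longrightarrow> B l \<in> carrier_mat (r l) (R l)"
  shows "tuple_coords L N R F \<in> module.span cscale (row_block R B ` row_block_indices L N r)"
proof -
  interpret vector_space cscale by (rule vector_space_cscale)
  let ?S = "\<Sum>l<L. \<Sum>i<N l. \<Sum>k<r l. cscale (G l $$ (i, k)) (row_block R B (l, i, k))"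
  have "tuple_coords L N R F = ?S"
  proof (intro ext)
    fix l' a b
    show "tuple_coords L N R F l' a b = ?S l' a b"
    proof (cases "l' < L \<and> a < N l' \<and> b < R l'")
      case True
      then have a: "a < N l'" and b: "b < R l'" by auto
      have "(\<Sum>i<N l. \<Sum>k<r l. G l $$ (i, k) * row_block R B (l, i, k) l' a b)
          = (if l = l' then \<Sum>k<r l. G l $$ (a, k) * B l $$ (k, b) else 0)" for l
      proof (cases "l = l'")
        case True
        then have "(\<Sum>i<N l. \<Sum>k<r l. G l $$ (i, k) * row_block R B (l, i, k) l' a b)
            = (\<Sum>i<N l. if i = a then \<Sum>k<r l. G l $$ (i, k) * B l $$ (k, b) else 0)"
          using b by (intro sum.cong) (auto simp: row_block_def)
        then show ?thesis using True a by simp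
      qed (simp add: row_block_def)
      then have "?S l' a b = (\<Sum>k<r l'. G l' $$ (a, k) * B l' $$ (k, b))"
        using True by (simp add: sum_apply)
      also have "\<dots> = tuple_coords L N R F l' a b"
        using True F G B index_mult_mat_sum[OF G B] by (simp add: tuple_coords_def)
      finally show ?thesis ..
    qed (auto simp: sum_apply row_block_def tuple_coords_def intro!: sum.neutral)
  qed
  also have "\<dots> \<in> span (row_block R B ` row_block_indices L N r)"
    by (intro span_sum span_scale span_base) (auto simp: row_block_indices_def)
  finally show ?thesis .
qed

lemma row_block_in_L_span:
  assumes l: "l < L" and A: "A l \<in> carrier_mat (N l) (R l)" and D: "D \<in> carrier_mat r (N l)"
    and B: "B l = D * A l" and i: "i < N l" and k: "k < r"
  shows "row_block R B (l, i, k) \<in> L_span L N R A"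
proof -
  define E where "E = mat (N l) (N l) (\<lambda>(a, c). if a = i then D $$ (k, c) else 0)"
  have E: "E \<in> carrier_mat (N l) (N l)" unfolding E_def by simp
  have "row_block R B (l, i, k) = block_coords N R l (E * A l)"
  proof (intro ext)
    fix l' a b
    show "row_block R B (l, i, k) l' a b = block_coords N R l (E * A l) l' a b"
    proof (cases "l' = l \<and> a < N l \<and> b < R l")
      case True
      then have "(E * A l) $$ (a, b) = (if a = i then (D * A l) $$ (k, b) else 0)"
        using index_mult_mat_sum[OF E A, of a b] index_mult_mat_sum[OF D A k, of b]
        by (auto simp: E_def intro: sum.neutral)
      then show ?thesis using True B by (simp add: row_block_def block_coords_def)
    qed (use i in \<open>auto simp: row_block_def block_coords_def\<close>)
  qed
  then show ?thesis using block_coords_mult_in_L_span[of l L A N R E] l A E by simp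
qed

lemma L_span_eq_span_row_blocks:
  assumes A: "\<And>l. l < L \<Longrightarrow> A l \<in> carrier_mat (N l) (R l)"
    and C: "\<And>l. l < L \<Longrightarrow> C l \<in> carrier_mat (N l) (r l)"
    and D: "\<And>l. l < L \<Longrightarrow> D l \<in> carrier_mat (r l) (N l)"
    and CDA: "\<And>l. l < L \<Longrightarrow> C l * (D l * A l) = A l"
  defines "B \<equiv> \<lambda>l. D l * A l"
  shows "L_span L N R A = module.span cscale (row_block R B ` row_block_indices L N r)"
proof -
  interpret vector_space cscale by (rule vector_space_cscale)
  let ?basis = "row_block R B ` row_block_indices L N r"
  have "H_orbit L N R A \<subseteq> span ?basis"
  proof
    fix w assume "w \<in> H_orbit L N R A"
    then obtain U where w: "w = tuple_coords L N R (\<lambda>l. U l * A l)"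
      and U: "\<And>l. l < L \<Longrightarrow> U l \<in> carrier_mat (N l) (N l)"
      unfolding H_orbit_def unitary_mat_def by blast
    have "U l * A l = (U l * C l) * B l" if "l < L" for l
      using assoc_mult_mat[OF U[OF that] C[OF that] mult_carrier_mat[OF D[OF that] A[OF that]]]
      by (simp add: B_def CDA[OF that])
    moreover have "U l * C l \<in> carrier_mat (N l) (r l)" if "l < L" for l
      using U[OF that] C[OF that] by simp
    moreover have "B l \<in> carrier_mat (r l) (R l)" if "l < L" for l
      unfolding B_def using D[OF that] A[OF that] by simp
    ultimately show "w \<in> span ?basis"
      unfolding w by (rule tuple_coords_in_span_row_blocks)
  qed
  moreover have "?basis \<subseteq> L_span L N R A"
  proof (clarsimp simp: row_block_indices_def)
    fix l i k assume "l < L" "i < N l" "k < r l"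
    then show "row_block R B (l, i, k) \<in> L_span L N R A"
      using A D unfolding B_def by (intro row_block_in_L_span[of l L A N R "D l"]) auto
  qed
  ultimately show ?thesis
    unfolding L_span_def by (simp add: span_eq)
qed

lemma dim_L_span:
  assumes A: "\<And>l. l < L \<Longrightarrow> A l \<in> carrier_mat (N l) (R l)"
  shows "vector_space.dim cscale (L_span L N R A) = (\<Sum>l<L. vec_space.rank (N l) (A l) * N l)"
proof -
  interpret vector_space cscale by (rule vector_space_cscale)
  define r where "r l = vec_space.rank (N l) (A l)" for l
  have "\<exists>C D js. C \<in> carrier_mat (N l) (r l) \<and> D \<in> carrier_mat (r l) (N l) \<and> C * (D * A l) = A l
      \<and> (\<forall>k<r l. js k < R l \<and> (\<forall>k'<r l. (D * A l) $$ (k', js k) = (if k' = k then 1 else 0)))"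
    if "l < L" for l
    unfolding r_def by (rule rank_factorization_with_pivots[OF A[OF that]]) blast
  then obtain C D js where C: "\<And>l. l < L \<Longrightarrow> C l \<in> carrier_mat (N l) (r l)"
    and D: "\<And>l. l < L \<Longrightarrow> D l \<in> carrier_mat (r l) (N l)"
    and CDA: "\<And>l. l < L \<Longrightarrow> C l * (D l * A l) = A l"
    and pivots: "\<And>l. l < L \<Longrightarrow> \<forall>k<r l. js l k < R l \<and>
        (\<forall>k'<r l. (D l * A l) $$ (k', js l k) = (if k' = k then 1 else 0))"
    by (metis (mono_tags))
  interpret pivoted_row_blocks L R r "\<lambda>l. D l * A l" js
    using pivots by unfold_locales auto
  show ?thesis
    using L_span_eq_span_row_blocks[of L A N R C r D, OF A C D CDA] dim_span_eq_card_independent[OF independent_row_blocks]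
      card_image[OF inj_on_row_block]
    by (simp add: card_row_block_indices r_def)
qed

theorem proposition3p5:
  fixes L :: nat and N R :: "nat \<Rightarrow> nat" and A :: "nat \<Rightarrow> complex mat"
  assumes "\<forall>l<L. N l \<ge> 1 \<and> R l \<ge> 1"
    and "\<forall>l<L. A l \<in> carrier_mat (N l) (R l)"
  shows "vector_space.dim cscale (L_span L N R A) = (\<Sum>l<L. vec_space.rank (N l) (A l) * N l)
     \<and> vector_space.dim cscale (L_span L N R A) \<le> (\<Sum>l<L. min (N l * R l) (N l ^ 2))"
proof -
  have A: "\<And>l. l < L \<Longrightarrow> A l \<in> carrier_mat (N l) (R l)" using assms(2) by blast
  have "(\<Sum>l<L. vec_space.rank (N l) (A l) * N l) \<le> (\<Sum>l<L. min (N l * R l) (N l ^ 2))"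
  proof (rule sum_mono)
    fix l assume "l \<in> {..<L}"
    then have "A l \<in> carrier_mat (N l) (R l)" using A by simp
    then have "vec_space.rank (N l) (A l) \<le> R l" "vec_space.rank (N l) (A l) \<le> N l"
      using vec_space.rank_le_nc rank_le_nr by blast+
    then show "vec_space.rank (N l) (A l) * N l \<le> min (N l * R l) (N l ^ 2)"
      by (simp add: power2_eq_square mult.commute)
  qed
  then show ?thesis using dim_L_span[OF A] by simp
qed

end
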